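(* Let $G$ be an additive group and let $(X,\rho)$ be the $\mathbb R$-tree described below. Then every point of $X$ is a point of valency $|G|+1$, i.e. for every $x\in X$ the set $X\setminus\{x\}$ has exactly $|G|+1$ connected components.
   Context: A function on an interval $(\alpha,\beta)$ is piecewise constant from the left if for every $x$ there is $\varepsilon>0$ with $f$ constant on $[x-\varepsilon,x]$. $X$ is the set of pairs $(f,a_f)$, $a_f>0$ real, $f:(a_f,+\infty)\to G$ piecewise constant from the left with $f|_{(b_f,+\infty)}\equiv0$ for some $b_f\ge a_f$. Order: $(f,a_f)\preceq(g,a_g)$ iff $a_f\le a_g$ and $f|_{(a_g,+\infty)}=g$; any two elements $p,q$ have a supremum $p\vee q$. Metric: $\rho((f,a_f),(g,a_g))=|a_f-a_g|$ if the pairs are comparable, and $\rho(p,q)=\rho(p,p\vee q)+\rho(p\vee q,q)$ otherwise. $|G|$ is the cardinality of $G$. *)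

theory Defs
  imports "HOL-Analysis.Analysis" "HOL-Library.Equipollence"
begin

text \<open>A point (f, a_f) is represented as a pair (f, a) with f :: real => 'g;
  the values of f outside the domain (a, +infinity) are normalised to 0,
  so that each point of the paper corresponds to exactly one pair.\<close>

definition pc_left :: "real \<Rightarrow> (real \<Rightarrow> 'g) \<Rightarrow> bool" where
  "pc_left a f \<longleftrightarrow> (\<forall>x>a. \<exists>\<epsilon>>0. x - \<epsilon> > a \<and> (\<forall>y\<in>{x-\<epsilon>..x}. f y = f x))"

definition Xspace :: "((real \<Rightarrow> 'g::zero) \<times> real) set" where
  "Xspace = {(f, a). a > 0 \<and> (\<forall>x. x \<le> a \<longrightarrow> f x = 0) \<and> pc_left a f
              \<and> (\<exists>b\<ge>a. \<forall>x>b. f x = 0)}"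

definition tle :: "((real \<Rightarrow> 'g::zero) \<times> real) \<Rightarrow> ((real \<Rightarrow> 'g) \<times> real) \<Rightarrow> bool" where
  "tle p q \<longleftrightarrow> snd p \<le> snd q \<and> (\<forall>x>snd q. fst p x = fst q x)"

definition tjoin :: "((real \<Rightarrow> 'g::zero) \<times> real) \<Rightarrow> ((real \<Rightarrow> 'g) \<times> real) \<Rightarrow> ((real \<Rightarrow> 'g) \<times> real)" where
  "tjoin p q = (THE s. s \<in> Xspace \<and> tle p s \<and> tle q s \<and>
                   (\<forall>t\<in>Xspace. tle p t \<and> tle q t \<longrightarrow> tle s t))"

definition trho :: "((real \<Rightarrow> 'g::zero) \<times> real) \<Rightarrow> ((real \<Rightarrow> 'g) \<times> real) \<Rightarrow> real" where
  "trho p q = (if tle p q \<or> tle q p then \<bar>snd p - snd q\<bar>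
               else \<bar>snd p - snd (tjoin p q)\<bar> + \<bar>snd (tjoin p q) - snd q\<bar>)"

definition Xtop :: "((real \<Rightarrow> 'g::zero) \<times> real) topology" where
  "Xtop = Metric_space.mtopology Xspace trho"

end

theory Submission
  imports Defs
begin

text \<open>Write \<open>a\<^sub>p\<close> for the level \<open>snd p\<close>. The join \<open>p \<or> q\<close> exists: it is the truncation of \<open>p\<close> at the
  infimum of the levels above which \<open>p\<close> and \<open>q\<close> agree. Then \<open>\<rho>(p,q) = 2 a\<^sub>p\<^sub>\<or>\<^sub>q - a\<^sub>p - a\<^sub>q\<close>, and the
  truncations \<open>t \<mapsto> f|\<^bsub>(t,\<infinity>)\<^esub>\<close> of a point are isometric rays, so any two points are joined by the
  connected arc running up to their join. Removing \<open>x\<close> leaves the points not below \<open>x\<close>, an upward closed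
  and hence connected open set, and for every \<open>g \<in> G\<close> the points strictly below \<open>x\<close> with value \<open>g\<close> at
  level \<open>a\<^sub>x\<close>. Two points of the latter kind are constant equal to \<open>g\<close> on a common interval to the left
  of \<open>a\<^sub>x\<close>, so their join lies strictly below \<open>x\<close> and the arc between them avoids \<open>x\<close>.
  Openness of all these sets follows from the distance formula. The resulting \<open>|G| + 1\<close> nonempty
  sets partition \<open>X - {x}\<close>, so they are its components.\<close>

lemma connected_components_of_subtopology_eq_partition:
  assumes conn: "\<And>C. C \<in> F \<Longrightarrow> connectedin X C" and opn: "\<And>C. C \<in> F \<Longrightarrow> openin X C"
    and cover: "\<Union>F = S" and nonempty: "{} \<notin> F" and disjoint: "pairwise disjnt F"
  shows "connected_components_of (subtopology X S) = F"
proof -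
  let ?Y = "subtopology X S"
  have "S \<subseteq> topspace X"
    using cover opn openin_subset by blast
  then have topspace_Y: "topspace ?Y = S" by auto
  have open_Y: "openin ?Y C" if "C \<in> F" for C
  proof -
    have "C = C \<inter> S" using that cover by blast
    with opn[OF that] show ?thesis unfolding openin_subtopology by blast
  qed
  have closed_Y: "closedin ?Y C" if "C \<in> F" for C
  proof -
    have "topspace ?Y - C = \<Union>(F - {C})"
      using that cover disjoint topspace_Y by (auto simp: pairwise_def disjnt_def)
    moreover have "openin ?Y (\<Union>(F - {C}))"
      using open_Y by blast
    moreover have "C \<subseteq> topspace ?Y" using that cover topspace_Y by blast
    ultimately show ?thesis by (simp add: closedin_def)
  qed
  have component: "connected_component_of_set ?Y z = C" if "C \<in> F" "z \<in> C" for C z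
  proof
    have "connectedin ?Y C"
      using that conn cover by (auto simp: connectedin_subtopology)
    then show "C \<subseteq> connected_component_of_set ?Y z"
      using that(2) by (rule connected_component_of_maximal)
    have "z \<in> topspace ?Y" using that cover topspace_Y by blast
    then have "z \<in> connected_component_of_set ?Y z"
      by (simp add: connected_component_of_refl)
    then show "connected_component_of_set ?Y z \<subseteq> C"
      using connectedin_clopen_cases[OF connectedin_connected_component_of closed_Y open_Y] that
      by (auto simp: disjnt_def)
  qed
  show ?thesis
    unfolding connected_components_of_def topspace_Y
  proof
    show "connected_component_of_set ?Y ` S \<subseteq> F"
      using component cover by blast
    show "F \<subseteq> connected_component_of_set ?Y ` S"
    proof
      fix C assume "C \<in> F"
      moreover obtain z where "z \<in> C" using \<open>C \<in> F\<close> nonempty by fastforce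
      ultimately show "C \<in> connected_component_of_set ?Y ` S"
        using component cover by blast
    qed
  qed
qed

lemma insert_range_eqpoll_option:
  fixes f :: "'b \<Rightarrow> 'a"
  assumes "inj f" "a \<notin> range f"
  shows "insert a (range f) \<approx> (UNIV :: 'b option set)"
proof -
  have "range f \<approx> (UNIV :: 'b set)"
    using assms(1) by (rule inj_on_image_eqpoll_self)
  moreover have "range (Some :: 'b \<Rightarrow> 'b option) \<approx> (UNIV :: 'b set)"
    by (rule inj_on_image_eqpoll_self) simp
  ultimately have "range f \<approx> range (Some :: 'b \<Rightarrow> 'b option)"
    using eqpoll_sym eqpoll_trans by blast
  then have "insert a (range f) \<approx> insert None (range (Some :: 'b \<Rightarrow> 'b option))"
    by (rule insert_eqpoll_cong) (use assms(2) in auto)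
  then show ?thesis by (simp add: UNIV_option_conv)
qed

lemma mem_Xspace_iff:
  "p \<in> Xspace \<longleftrightarrow> snd p > 0 \<and> (\<forall>y\<le>snd p. fst p y = 0) \<and> pc_left (snd p) (fst p)
     \<and> (\<exists>b\<ge>snd p. \<forall>y>b. fst p y = 0)"
  by (cases p) (simp add: Xspace_def)

lemma pc_left_cong:
  assumes "pc_left a f" and "\<And>y. y > a \<Longrightarrow> f y = g y"
  shows "pc_left a g"
  unfolding pc_left_def
proof (intro allI impI)
  fix x assume "x > a"
  then obtain e where e: "e > 0" "x - e > a" "\<forall>y\<in>{x-e..x}. f y = f x"
    using assms(1) unfolding pc_left_def by blast
  have "g y = g x" if "y \<in> {x-e..x}" for y
    using that e assms(2)[of y] assms(2)[of x] \<open>x > a\<close> by simp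
  with e show "\<exists>e>0. x - e > a \<and> (\<forall>y\<in>{x-e..x}. g y = g x)" by blast
qed

lemma pc_left_mono:
  assumes "pc_left a f" and "a \<le> b"
  shows "pc_left b f"
  unfolding pc_left_def
proof (intro allI impI)
  fix x assume "x > b"
  then obtain e where e: "e > 0" "\<forall>y\<in>{x-e..x}. f y = f x"
    using assms unfolding pc_left_def by (meson order.strict_trans1)
  define e' where "e' = min e ((x - b) / 2)"
  have "e' > 0" using e(1) \<open>x > b\<close> by (simp add: e'_def)
  have "e' \<le> e" "e' \<le> (x - b) / 2"
    unfolding e'_def by (rule min.cobounded1, rule min.cobounded2)
  then have "x - e' > b" "{x-e'..x} \<subseteq> {x-e..x}"
    using \<open>x > b\<close> by auto
  with \<open>e' > 0\<close> e(2) show "\<exists>e>0. x - e > b \<and> (\<forall>y\<in>{x-e..x}. f y = f x)" by blast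
qed

lemma pc_left_extend_constant:
  assumes "pc_left a f" and "b < a"
  shows "pc_left b (\<lambda>y. if y > a then f y else if y > b then v else 0)"
    (is "pc_left b ?g")
  unfolding pc_left_def
proof (intro allI impI)
  fix x assume "x > b"
  show "\<exists>e>0. x - e > b \<and> (\<forall>y\<in>{x-e..x}. ?g y = ?g x)"
  proof (cases "x > a")
    case True
    then obtain e where e: "e > 0" "x - e > a" "\<forall>y\<in>{x-e..x}. f y = f x"
      using assms(1) unfolding pc_left_def by blast
    have "?g y = ?g x" if "y \<in> {x-e..x}" for y
    proof -
      have "f y = f x" using that e(3) by blast
      with that e(2) True show ?thesis by simp
    qed
    moreover have "x - e > b" using e(2) assms(2) by linarith
    ultimately show ?thesis using e(1) by blast
  next
    case False
    have "?g y = ?g x" if "y \<in> {x - (x-b)/2..x}" for y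
    proof -
      from that have "x - (x-b)/2 \<le> y" "y \<le> x" by simp_all
      then have "b < y" using \<open>x > b\<close> by (simp add: field_simps)
      moreover have "\<not> a < y" using \<open>y \<le> x\<close> False by linarith
      ultimately show ?thesis using False \<open>x > b\<close> by simp
    qed
    moreover have "(x - b) / 2 > 0" "x - (x - b) / 2 > b" using \<open>x > b\<close> by (simp_all add: field_simps)
    ultimately show ?thesis by blast
  qed
qed

lemma tle_refl [simp]: "tle p p"
  by (simp add: tle_def)

lemma tle_trans: "tle p q \<Longrightarrow> tle q r \<Longrightarrow> tle p r"
  unfolding tle_def by force

lemma tle_imp_snd_le: "tle p q \<Longrightarrow> snd p \<le> snd q"
  by (simp add: tle_def)

lemma tle_upper_chain: "tle p s \<Longrightarrow> tle p t \<Longrightarrow> snd s \<le> snd t \<Longrightarrow> tle s t"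
  unfolding tle_def by force

lemma tle_snd_le_imp_eq:
  assumes "p \<in> Xspace" "q \<in> Xspace" "tle p q" "snd q \<le> snd p"
  shows "p = q"
proof -
  have level: "snd p = snd q" using assms(3,4) by (simp add: tle_def)
  have "fst p y = fst q y" for y
    using assms(1-3) level by (cases "y > snd q") (auto simp: tle_def mem_Xspace_iff)
  with level show ?thesis by (simp add: prod_eq_iff fun_eq_iff)
qed

lemma tle_antisym: "p \<in> Xspace \<Longrightarrow> q \<in> Xspace \<Longrightarrow> tle p q \<Longrightarrow> tle q p \<Longrightarrow> p = q"
  by (meson tle_imp_snd_le tle_snd_le_imp_eq)

definition tree_ray :: "((real \<Rightarrow> 'g::zero) \<times> real) \<Rightarrow> real \<Rightarrow> (real \<Rightarrow> 'g) \<times> real" where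
  "tree_ray p t = ((\<lambda>y. if y > t then fst p y else 0), t)"

lemma snd_tree_ray [simp]: "snd (tree_ray p t) = t"
  by (simp add: tree_ray_def)

lemma fst_tree_ray: "fst (tree_ray p t) y = (if y > t then fst p y else 0)"
  by (simp add: tree_ray_def)

lemma tree_ray_eq_iff: "tree_ray p t = tree_ray q t \<longleftrightarrow> (\<forall>y>t. fst p y = fst q y)"
  by (auto simp: tree_ray_def fun_eq_iff)

lemma tree_ray_in_Xspace:
  assumes "p \<in> Xspace" "snd p \<le> t"
  shows "tree_ray p t \<in> Xspace"
proof -
  obtain b where b: "\<forall>y>b. fst p y = 0" and "snd p > 0" "pc_left (snd p) (fst p)"
    using assms(1) by (auto simp: mem_Xspace_iff)
  have "pc_left t (fst (tree_ray p t))"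
    using pc_left_mono[OF \<open>pc_left (snd p) (fst p)\<close> assms(2)]
    by (rule pc_left_cong) (simp add: fst_tree_ray)
  moreover have "\<exists>b'\<ge>t. \<forall>y>b'. fst (tree_ray p t) y = 0"
    using b by (intro exI[of _ "max b t"]) (simp add: fst_tree_ray)
  moreover have "\<forall>y\<le>t. fst (tree_ray p t) y = 0" "t > 0"
    using \<open>snd p > 0\<close> assms(2) by (simp_all add: fst_tree_ray)
  ultimately show ?thesis
    unfolding mem_Xspace_iff snd_tree_ray by blast
qed

lemma tle_tree_ray: "snd p \<le> t \<Longrightarrow> tle p (tree_ray p t)"
  by (simp add: tle_def fst_tree_ray)

lemma tree_ray_at_upper_bound: "s \<in> Xspace \<Longrightarrow> tle p s \<Longrightarrow> tree_ray p (snd s) = s"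
  by (auto simp: tree_ray_def tle_def mem_Xspace_iff prod_eq_iff)

lemma trho_tree_ray: "trho (tree_ray p t) (tree_ray p t') = \<bar>t - t'\<bar>"
proof -
  have "tle (tree_ray p t) (tree_ray p t') \<or> tle (tree_ray p t') (tree_ray p t)"
    by (cases "t \<le> t'") (auto simp: tle_def fst_tree_ray)
  then show ?thesis by (simp add: trho_def)
qed

lemma tjoin_exists:
  assumes p: "p \<in> Xspace" and q: "q \<in> Xspace"
  shows "\<exists>s\<in>Xspace. tle p s \<and> tle q s \<and> (\<forall>t\<in>Xspace. tle p t \<and> tle q t \<longrightarrow> tle s t)"
proof -
  obtain bp bq where "\<forall>y>bp. fst p y = 0" "\<forall>y>bq. fst q y = 0"
    using p q by (auto simp: mem_Xspace_iff)
  define S where "S = {t. max (snd p) (snd q) \<le> t \<and> (\<forall>y>t. fst p y = fst q y)}"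
  have S_ne: "max (max bp bq) (max (snd p) (snd q)) \<in> S"
    using \<open>\<forall>y>bp. fst p y = 0\<close> \<open>\<forall>y>bq. fst q y = 0\<close> by (auto simp: S_def)
  have S_bdd: "bdd_below S"
    unfolding S_def bdd_below_def by auto
  define m where "m = Inf S"
  have agree: "fst p y = fst q y" if "y > m" for y
  proof -
    obtain t where "t \<in> S" "t < y"
      using \<open>y > m\<close> cInf_less_iff[of S y] S_ne S_bdd m_def by blast
    then show ?thesis by (auto simp: S_def)
  qed
  have m_ge: "max (snd p) (snd q) \<le> m"
    unfolding m_def by (rule cInf_greatest) (use S_ne in \<open>auto simp: S_def\<close>)
  have "tree_ray p m \<in> Xspace" "tle p (tree_ray p m)"
    using m_ge by (auto intro: tree_ray_in_Xspace[OF p] tle_tree_ray)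
  moreover have "tle q (tree_ray p m)"
    using agree m_ge by (auto simp: tle_def fst_tree_ray)
  moreover have "tle (tree_ray p m) t" if "t \<in> Xspace" "tle p t" "tle q t" for t
  proof -
    have "snd t \<in> S" using that by (auto simp: S_def tle_def)
    then have "m \<le> snd t" unfolding m_def using S_bdd by (rule cInf_lower)
    then show ?thesis using that by (auto simp: tle_def fst_tree_ray)
  qed
  ultimately show ?thesis by blast
qed

lemma tjoin_eqI:
  assumes "s \<in> Xspace" "tle p s" "tle q s"
    and "\<And>t. t \<in> Xspace \<Longrightarrow> tle p t \<Longrightarrow> tle q t \<Longrightarrow> tle s t"
  shows "tjoin p q = s"
  unfolding tjoin_def using assms by (rule_tac the_equality) (auto intro: tle_antisym)

lemma tjoin_lub:
  assumes "p \<in> Xspace" "q \<in> Xspace"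
  shows "tjoin p q \<in> Xspace" "tle p (tjoin p q)" "tle q (tjoin p q)"
    and "\<And>t. t \<in> Xspace \<Longrightarrow> tle p t \<Longrightarrow> tle q t \<Longrightarrow> tle (tjoin p q) t"
  using tjoin_exists[OF assms] tjoin_eqI by metis+

lemma tjoin_commute: "tjoin p q = tjoin q p"
  unfolding tjoin_def by (metis (no_types, lifting))

lemma tjoin_eq_right: "q \<in> Xspace \<Longrightarrow> tle p q \<Longrightarrow> tjoin p q = q"
  by (rule tjoin_eqI) auto

lemma trho_eq:
  assumes "p \<in> Xspace" "q \<in> Xspace"
  shows "trho p q = 2 * snd (tjoin p q) - snd p - snd q"
proof (cases "tle p q \<or> tle q p")
  case True
  then show ?thesis
  proof
    assume "tle p q"
    then show ?thesis
      using assms(2) tjoin_eq_right[of q p] tle_imp_snd_le[of p q] by (simp add: trho_def)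
  next
    assume "tle q p"
    then show ?thesis
      using assms(1) tjoin_eq_right[of p q] tjoin_commute[of p q] tle_imp_snd_le[of q p]
      by (simp add: trho_def)
  qed
next
  case False
  have "snd p \<le> snd (tjoin p q)" "snd q \<le> snd (tjoin p q)"
    using tjoin_lub[OF assms] by (auto dest: tle_imp_snd_le)
  with False show ?thesis by (simp add: trho_def)
qed

lemma snd_tjoin_le_trho: "p \<in> Xspace \<Longrightarrow> q \<in> Xspace \<Longrightarrow> snd (tjoin p q) \<le> snd p + trho p q"
  using tjoin_lub(3)[of p q] trho_eq[of p q] by (auto dest: tle_imp_snd_le)

lemma trho_triangle:
  assumes "x \<in> Xspace" "y \<in> Xspace" "z \<in> Xspace"
  shows "trho x z \<le> trho x y + trho y z"
proof -
  let ?xy = "tjoin x y" and ?yz = "tjoin y z" and ?xz = "tjoin x z"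
  note xy = tjoin_lub[OF assms(1,2)] and yz = tjoin_lub[OF assms(2,3)]
    and xz = tjoin_lub[OF assms(1,3)]
  text \<open>Both \<open>?xy\<close> and \<open>?yz\<close> lie above \<open>y\<close>, hence are comparable; the larger one bounds \<open>?xz\<close>.\<close>
  have "snd ?xz + snd y \<le> snd ?xy + snd ?yz"
  proof (cases "snd ?xy \<le> snd ?yz")
    case True
    then have "tle x ?yz" using tle_upper_chain[OF xy(3) yz(2)] xy(2) tle_trans by blast
    then have "tle ?xz ?yz" using xz(4) yz(1,3) by blast
    then show ?thesis using xy(3) True by (auto dest!: tle_imp_snd_le)
  next
    case False
    then have "tle ?yz ?xy" using tle_upper_chain[OF yz(2) xy(3)] by simp
    then have "tle z ?xy" using yz(3) tle_trans by blast
    then have "tle ?xz ?xy" using xz(4) xy(1,2) by blast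
    then show ?thesis using yz(2) by (auto dest!: tle_imp_snd_le)
  qed
  then show ?thesis
    using trho_eq[OF assms(1,3)] trho_eq[OF assms(1,2)] trho_eq[OF assms(2,3)] by linarith
qed

lemma Metric_space_Xspace: "Metric_space Xspace trho"
proof
  show "0 \<le> trho x y" for x y :: "(real \<Rightarrow> 'a) \<times> real"
    by (auto simp: trho_def)
  show "trho x y = trho y x" for x y :: "(real \<Rightarrow> 'a) \<times> real"
    by (auto simp: trho_def tjoin_commute[of x y])
  show "trho x z \<le> trho x y + trho y z"
    if "x \<in> Xspace" "y \<in> Xspace" "z \<in> Xspace" for x y z :: "(real \<Rightarrow> 'a) \<times> real"
    using that by (rule trho_triangle)
  show "trho x y = 0 \<longleftrightarrow> x = y"
    if "x \<in> Xspace" "y \<in> Xspace" for x y :: "(real \<Rightarrow> 'a) \<times> real"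
  proof
    assume "trho x y = 0"
    then have "snd (tjoin x y) \<le> snd x" "snd (tjoin x y) \<le> snd y"
      using trho_eq[OF that] tjoin_lub[OF that] by (auto dest!: tle_imp_snd_le)
    then show "x = y"
      using tjoin_lub[OF that] tle_snd_le_imp_eq that by metis
  qed (simp add: trho_def)
qed

interpretation XM: Metric_space Xspace trho
  by (rule Metric_space_Xspace)

lemma openin_Xtop: "openin Xtop U \<longleftrightarrow> U \<subseteq> Xspace \<and> (\<forall>x\<in>U. \<exists>r>0. XM.mball x r \<subseteq> U)"
  by (auto simp: Xtop_def XM.openin_mtopology)

lemma continuous_map_tree_ray:
  assumes "p \<in> Xspace"
  shows "continuous_map (top_of_set {snd p..}) Xtop (tree_ray p)"
  unfolding Xtop_def XM.continuous_map_to_metric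
proof (intro ballI allI impI)
  fix t and e :: real
  assume t: "t \<in> topspace (top_of_set {snd p..})" and "e > 0"
  let ?U = "{snd p..} \<inter> ball t e"
  have "openin (top_of_set {snd p..}) ?U"
    by (simp add: openin_open_Int)
  moreover have "t \<in> ?U" using t \<open>e > 0\<close> by simp
  moreover have "tree_ray p y \<in> XM.mball (tree_ray p t) e" if "y \<in> ?U" for y
    using that t tree_ray_in_Xspace[OF assms] by (simp add: trho_tree_ray dist_real_def)
  ultimately show "\<exists>U. openin (top_of_set {snd p..}) U \<and> t \<in> U
      \<and> (\<forall>y\<in>U. tree_ray p y \<in> XM.mball (tree_ray p t) e)"
    by blast
qed

lemma connectedin_tree_ray_image:
  assumes "p \<in> Xspace" "I \<subseteq> {snd p..}" "connected I"
  shows "connectedin Xtop (tree_ray p ` I)"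
proof (rule connectedin_continuous_map_image[OF continuous_map_tree_ray[OF assms(1)]])
  show "connectedin (top_of_set {snd p..}) I"
    using assms(2,3) by (simp add: connectedin_subtopology)
qed

definition tree_arc :: "((real \<Rightarrow> 'g::zero) \<times> real) \<Rightarrow> ((real \<Rightarrow> 'g) \<times> real) \<Rightarrow> ((real \<Rightarrow> 'g) \<times> real) set"
  where "tree_arc p q = tree_ray p ` {snd p..snd (tjoin p q)} \<union> tree_ray q ` {snd q..snd (tjoin p q)}"

lemma tree_arc_commute: "tree_arc p q = tree_arc q p"
  unfolding tree_arc_def tjoin_commute[of p q] by blast

lemma mem_tree_ray_image_tjoin:
  assumes "p \<in> Xspace" "q \<in> Xspace"
  shows "tjoin p q \<in> tree_ray p ` {snd p..snd (tjoin p q)}"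
proof
  show "tjoin p q = tree_ray p (snd (tjoin p q))"
    using tree_ray_at_upper_bound tjoin_lub(1,2)[OF assms] by metis
  show "snd (tjoin p q) \<in> {snd p..snd (tjoin p q)}"
    using tle_imp_snd_le[OF tjoin_lub(2)[OF assms]] by simp
qed

lemma connectedin_tree_arc:
  assumes "p \<in> Xspace" "q \<in> Xspace"
  shows "connectedin Xtop (tree_arc p q)"
  unfolding tree_arc_def
proof (rule connectedin_Un)
  show "connectedin Xtop (tree_ray p ` {snd p..snd (tjoin p q)})"
    using assms(1) by (rule connectedin_tree_ray_image) auto
  show "connectedin Xtop (tree_ray q ` {snd q..snd (tjoin p q)})"
    using assms(2) by (rule connectedin_tree_ray_image) auto
  show "tree_ray p ` {snd p..snd (tjoin p q)} \<inter> tree_ray q ` {snd q..snd (tjoin p q)} \<noteq> {}"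
    using mem_tree_ray_image_tjoin[OF assms] mem_tree_ray_image_tjoin[OF assms(2,1)]
    unfolding tjoin_commute[of q p] by blast
qed

lemma left_mem_tree_arc:
  assumes "p \<in> Xspace" "q \<in> Xspace"
  shows "p \<in> tree_arc p q"
proof -
  have "p = tree_ray p (snd p)" using tree_ray_at_upper_bound[OF assms(1) tle_refl] by simp
  moreover have "snd p \<in> {snd p..snd (tjoin p q)}"
    using tle_imp_snd_le[OF tjoin_lub(2)[OF assms]] by simp
  ultimately show ?thesis unfolding tree_arc_def by blast
qed

lemma connectedin_if_tree_arcs_subset:
  assumes "S \<subseteq> Xspace" and "\<And>p q. p \<in> S \<Longrightarrow> q \<in> S \<Longrightarrow> tree_arc p q \<subseteq> S"
  shows "connectedin Xtop S"
proof (cases "S = {}")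
  case False
  then obtain z where "z \<in> S" by blast
  have "q \<in> tree_arc z q" if "q \<in> S" for q
    using that \<open>z \<in> S\<close> assms(1) left_mem_tree_arc[of q z] tree_arc_commute[of z q] by auto
  with \<open>z \<in> S\<close> assms(2) have "S = (\<Union>q\<in>S. tree_arc z q)" by blast
  moreover have "connectedin Xtop (\<Union>q\<in>S. tree_arc z q)"
    using \<open>z \<in> S\<close> assms(1)
    by (intro connectedin_Union) (auto intro!: connectedin_tree_arc left_mem_tree_arc)
  ultimately show ?thesis by simp
qed simp

definition upper_branch :: "((real \<Rightarrow> 'g::zero) \<times> real) \<Rightarrow> ((real \<Rightarrow> 'g) \<times> real) set" where
  "upper_branch x = {q \<in> Xspace. \<not> tle q x}"

text \<open>By left piecewise constancy, \<open>fst q (snd x)\<close> is the value of \<open>q\<close> on an interval just below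
  level \<open>snd x\<close>: it tells in which direction \<open>q\<close> leaves \<open>x\<close>.\<close>

definition lower_branch :: "((real \<Rightarrow> 'g::zero) \<times> real) \<Rightarrow> 'g \<Rightarrow> ((real \<Rightarrow> 'g) \<times> real) set" where
  "lower_branch x v = {q \<in> Xspace. tle q x \<and> snd q < snd x \<and> fst q (snd x) = v}"

lemma tree_ray_mem_upper_branch:
  "q \<in> upper_branch x \<Longrightarrow> snd q \<le> t \<Longrightarrow> tree_ray q t \<in> upper_branch x"
  unfolding upper_branch_def using tree_ray_in_Xspace tle_tree_ray tle_trans by blast

lemma tree_ray_mem_lower_branch:
  "q \<in> lower_branch x v \<Longrightarrow> snd q \<le> t \<Longrightarrow> t < snd x \<Longrightarrow> tree_ray q t \<in> lower_branch x v"
  by (auto simp: lower_branch_def tle_def fst_tree_ray tree_ray_in_Xspace)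

lemma upper_branch_nonempty:
  assumes "x \<in> Xspace"
  shows "upper_branch x \<noteq> {}"
proof -
  have "tree_ray x (snd x + 1) \<in> Xspace"
    using assms by (rule tree_ray_in_Xspace) simp
  moreover have "\<not> tle (tree_ray x (snd x + 1)) x"
    using tle_imp_snd_le by fastforce
  ultimately show ?thesis unfolding upper_branch_def by blast
qed

lemma lower_branch_nonempty:
  assumes "x \<in> Xspace"
  shows "lower_branch x v \<noteq> {}"
proof -
  define a where "a = snd x"
  define w where "w = ((\<lambda>y. if y > a then fst x y else if y > a / 2 then v else 0), a / 2)"
  obtain b where "a > 0" "pc_left a (fst x)" "\<forall>y>b. fst x y = 0"
    using assms by (auto simp: mem_Xspace_iff a_def)
  then have "pc_left (snd w) (fst w)" "\<forall>y>max a b. fst w y = 0"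
    by (auto simp: w_def intro: pc_left_extend_constant)
  with \<open>a > 0\<close> have "w \<in> Xspace"
    unfolding mem_Xspace_iff by (auto simp: w_def intro!: exI[of _ "max a b"])
  moreover have "tle w x" "snd w < a" "fst w a = v"
    using \<open>a > 0\<close> by (auto simp: w_def tle_def a_def)
  ultimately show ?thesis
    unfolding lower_branch_def a_def by blast
qed

lemma upper_branch_Un_lower_branches:
  assumes "x \<in> Xspace"
  shows "upper_branch x \<union> (\<Union>v. lower_branch x v) = Xspace - {x}"
proof -
  have "q \<in> lower_branch x (fst q (snd x))" if "q \<in> Xspace" "q \<noteq> x" "tle q x" for q
  proof -
    have "snd q < snd x"
      using that assms tle_snd_le_imp_eq[of q x] by (meson not_less)
    with that show ?thesis by (simp add: lower_branch_def)
  qed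
  then show ?thesis
    by (auto simp: upper_branch_def lower_branch_def)
qed

lemma openin_upper_branch:
  assumes x: "x \<in> Xspace"
  shows "openin Xtop (upper_branch x)"
  unfolding openin_Xtop
proof (intro conjI ballI)
  show "upper_branch x \<subseteq> Xspace" by (auto simp: upper_branch_def)
  fix q assume "q \<in> upper_branch x"
  then have q: "q \<in> Xspace" "\<not> tle q x" by (auto simp: upper_branch_def)
  have "q \<noteq> x" using q(2) by auto
  then have "trho q x > 0" using q(1) x by (rule XM.mdist_pos_less)
  moreover have "XM.mball q (trho q x) \<subseteq> upper_branch x"
  proof
    fix p assume "p \<in> XM.mball q (trho q x)"
    then have p: "p \<in> Xspace" and closer: "trho q p < trho q x" by auto
    have "\<not> tle p x"
    proof
      assume "tle p x"
      let ?qp = "tjoin q p" and ?qx = "tjoin q x"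
      note qp = tjoin_lub[OF q(1) p] and qx = tjoin_lub[OF q(1) x]
      text \<open>The join of \<open>q\<close> and \<open>p\<close> cannot lie below \<open>x\<close>, as \<open>q\<close> does not; so it lies above \<open>x\<close>,
        hence above \<open>?qx\<close>.\<close>
      have "\<not> snd ?qp \<le> snd x"
        using tle_upper_chain[OF qp(3) \<open>tle p x\<close>] qp(2) q(2) tle_trans by blast
      then have "tle x ?qp" using tle_upper_chain[OF \<open>tle p x\<close> qp(3)] by simp
      then have "snd ?qx \<le> snd ?qp" using qx(4) qp(1,2) tle_imp_snd_le by blast
      then show False
        using closer tle_imp_snd_le[OF \<open>tle p x\<close>] trho_eq[OF q(1) p] trho_eq[OF q(1) x] by linarith
    qed
    with p show "p \<in> upper_branch x" by (simp add: upper_branch_def)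
  qed
  ultimately show "\<exists>r>0. XM.mball q r \<subseteq> upper_branch x" by blast
qed

lemma openin_lower_branch: "openin Xtop (lower_branch x v)"
  unfolding openin_Xtop
proof (intro conjI ballI)
  show "lower_branch x v \<subseteq> Xspace" by (auto simp: lower_branch_def)
  fix q assume "q \<in> lower_branch x v"
  then have q: "q \<in> Xspace" "tle q x" "snd q < snd x" "fst q (snd x) = v"
    by (auto simp: lower_branch_def)
  have "XM.mball q (snd x - snd q) \<subseteq> lower_branch x v"
  proof
    fix p assume "p \<in> XM.mball q (snd x - snd q)"
    then have p: "p \<in> Xspace" and "trho q p < snd x - snd q" by auto
    let ?s = "tjoin q p"
    note s = tjoin_lub[OF q(1) p]
    have "snd ?s < snd x"
      using snd_tjoin_le_trho[OF q(1) p] \<open>trho q p < snd x - snd q\<close> by linarith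
    then have "tle ?s x" using tle_upper_chain[OF s(2) q(2)] by simp
    then have "tle p x" using s(3) tle_trans by blast
    moreover have "fst p (snd x) = v"
      using s(2,3) \<open>snd ?s < snd x\<close> q(4) by (auto simp: tle_def)
    moreover have "snd p < snd x"
      using tle_imp_snd_le[OF s(3)] \<open>snd ?s < snd x\<close> by linarith
    ultimately show "p \<in> lower_branch x v" using p by (simp add: lower_branch_def)
  qed
  then show "\<exists>r>0. XM.mball q r \<subseteq> lower_branch x v" using q(3)
    by (intro exI[of _ "snd x - snd q"]) simp
qed

lemma connectedin_upper_branch: "connectedin Xtop (upper_branch x)"
proof (rule connectedin_if_tree_arcs_subset)
  show "upper_branch x \<subseteq> Xspace" by (auto simp: upper_branch_def)
  fix p q assume pq: "p \<in> upper_branch x" "q \<in> upper_branch x"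
  have "tree_ray r ` {snd r..snd (tjoin p q)} \<subseteq> upper_branch x" if "r \<in> upper_branch x" for r
    using that by (auto intro: tree_ray_mem_upper_branch)
  with pq show "tree_arc p q \<subseteq> upper_branch x"
    unfolding tree_arc_def by (simp add: Un_least)
qed

lemma lower_branch_constant_below:
  assumes "q \<in> lower_branch x v"
  shows "\<exists>s. snd q \<le> s \<and> s < snd x \<and> (\<forall>y. s < y \<and> y \<le> snd x \<longrightarrow> fst q y = v)"
proof -
  have q: "pc_left (snd q) (fst q)" "snd q < snd x" "fst q (snd x) = v"
    using assms by (auto simp: lower_branch_def mem_Xspace_iff)
  then obtain e where e: "e > 0" "snd x - e > snd q" "\<forall>y\<in>{snd x - e..snd x}. fst q y = fst q (snd x)"
    unfolding pc_left_def by blast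
  have "fst q y = v" if "snd x - e < y" "y \<le> snd x" for y
  proof -
    from that have "y \<in> {snd x - e..snd x}" by simp
    with e(3) q(3) show ?thesis by blast
  qed
  moreover have "snd q \<le> snd x - e" "snd x - e < snd x" using e(1,2) by simp_all
  ultimately show ?thesis by blast
qed

lemma snd_tjoin_lower_branch_less:
  assumes p: "p \<in> lower_branch x v" and q: "q \<in> lower_branch x v"
  shows "snd (tjoin p q) < snd x"
proof -
  obtain s where s: "snd p \<le> s" "s < snd x" "\<And>y. s < y \<Longrightarrow> y \<le> snd x \<Longrightarrow> fst p y = v"
    using lower_branch_constant_below[OF p] by blast
  obtain s' where s': "snd q \<le> s'" "s' < snd x" "\<And>y. s' < y \<Longrightarrow> y \<le> snd x \<Longrightarrow> fst q y = v"
    using lower_branch_constant_below[OF q] by blast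
  define t where "t = max s s'"
  have "fst p y = fst q y" if "y > t" for y
  proof (cases "y \<le> snd x")
    case True
    moreover have "s < y" "s' < y" using that by (simp_all add: t_def)
    ultimately show ?thesis using s(3) s'(3) by simp
  next
    case False
    then have "fst p y = fst x y" "fst q y = fst x y"
      using p q by (simp_all add: lower_branch_def tle_def)
    then show ?thesis by simp
  qed
  then have "tree_ray q t = tree_ray p t" by (simp add: tree_ray_eq_iff)
  moreover have pX: "p \<in> Xspace" and qX: "q \<in> Xspace" and "snd p \<le> t" "snd q \<le> t"
    using p q s s' by (auto simp: lower_branch_def t_def)
  ultimately have "tle p (tree_ray p t)" "tle q (tree_ray p t)" "tree_ray p t \<in> Xspace"
    using tle_tree_ray tree_ray_in_Xspace by metis+
  then have "tle (tjoin p q) (tree_ray p t)"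
    using tjoin_lub(4)[OF pX qX] by blast
  then have "snd (tjoin p q) \<le> t"
    using tle_imp_snd_le by fastforce
  moreover have "t < snd x" using s(2) s'(2) by (simp add: t_def)
  ultimately show ?thesis by linarith
qed

lemma connectedin_lower_branch: "connectedin Xtop (lower_branch x v)"
proof (rule connectedin_if_tree_arcs_subset)
  show "lower_branch x v \<subseteq> Xspace" by (auto simp: lower_branch_def)
  fix p q assume pq: "p \<in> lower_branch x v" "q \<in> lower_branch x v"
  have "tree_ray r ` {snd r..snd (tjoin p q)} \<subseteq> lower_branch x v" if "r \<in> lower_branch x v" for r
  proof (rule image_subsetI)
    fix t assume "t \<in> {snd r..snd (tjoin p q)}"
    with that snd_tjoin_lower_branch_less[OF pq] show "tree_ray r t \<in> lower_branch x v"
      by (intro tree_ray_mem_lower_branch) auto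
  qed
  with pq show "tree_arc p q \<subseteq> lower_branch x v"
    unfolding tree_arc_def by (simp add: Un_least)
qed

lemma connected_components_of_punctured_Xtop:
  assumes "x \<in> Xspace"
  shows "connected_components_of (subtopology Xtop (Xspace - {x}))
           = insert (upper_branch x) (range (lower_branch x))"
proof (rule connected_components_of_subtopology_eq_partition)
  show "\<Union>(insert (upper_branch x) (range (lower_branch x))) = Xspace - {x}"
    using upper_branch_Un_lower_branches[OF assms] by simp
  show "{} \<notin> insert (upper_branch x) (range (lower_branch x))"
    using upper_branch_nonempty[OF assms] lower_branch_nonempty[OF assms] by auto
  show "pairwise disjnt (insert (upper_branch x) (range (lower_branch x)))"
    by (auto simp: pairwise_def disjnt_def upper_branch_def lower_branch_def)
  show "connectedin Xtop C" if "C \<in> insert (upper_branch x) (range (lower_branch x))" for C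
    using that connectedin_upper_branch connectedin_lower_branch by blast
  show "openin Xtop C" if "C \<in> insert (upper_branch x) (range (lower_branch x))" for C
    using that openin_upper_branch[OF assms] openin_lower_branch by blast
qed

lemma inj_lower_branch:
  assumes "x \<in> Xspace"
  shows "inj (lower_branch x)"
proof (rule injI)
  fix v v' assume eq: "lower_branch x v = lower_branch x v'"
  obtain q where q: "q \<in> lower_branch x v"
    using lower_branch_nonempty[OF assms] by blast
  with eq have "q \<in> lower_branch x v'" by simp
  with q show "v = v'" by (simp add: lower_branch_def)
qed

lemma upper_branch_notin_range_lower_branch:
  assumes "x \<in> Xspace"
  shows "upper_branch x \<notin> range (lower_branch x)"
proof
  assume "upper_branch x \<in> range (lower_branch x)"
  then obtain v where eq: "upper_branch x = lower_branch x v" by blast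
  obtain q where q: "q \<in> lower_branch x v"
    using lower_branch_nonempty[OF assms] by blast
  with eq have "q \<in> upper_branch x" by simp
  with q show False by (simp add: upper_branch_def lower_branch_def)
qed

theorem lemma6:
  fixes x :: "(real \<Rightarrow> 'g::ab_group_add) \<times> real"
  assumes "x \<in> Xspace"
  shows "connected_components_of (subtopology Xtop (Xspace - {x})) \<approx> (UNIV :: 'g option set)"
  unfolding connected_components_of_punctured_Xtop[OF assms]
  using inj_lower_branch[OF assms] upper_branch_notin_range_lower_branch[OF assms]
  by (rule insert_range_eqpoll_option)

end
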